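(* Let $H$ be a real Hilbert space, $C\subseteq H$ nonempty, closed and convex, and $F:H\to H$ an operator such that (A1) $S_D\neq\emptyset$; (A2) $F$ is quasimonotone; (A3) $F$ is uniformly continuous on $H$; (A4) whenever $\{x_n\}\subset H$ and $x_n\rightharpoonup x$, one has $\|F(x)\|\le\liminf_{n\to\infty}\|F(x_n)\|$. Let $\{z_n\}$ be the sequence generated by Algorithm 3.1 (with $\epsilon=0$), and assume $z_n\neq w_n$ for all $n$. Then there exists a weak cluster point $u^*$ of $\{z_n\}$ such that $u^*\in S_D$ or $F(u^* )=0$.
   Context: $\rightharpoonup$ denotes weak convergence. $P_C$ denotes the metric projection onto $C$. $S_D$ is the set of $z\in C$ with $\langle F(v),v-z\rangle\ge0$ for all $v\in C$. $F$ is quasimonotone if $\langle F(w),z-w\rangle>0$ implies $\langle F(z),z-w\rangle\ge0$ for all $w,z\in H$. Algorithm 3.1 (with $\epsilon=0$): fix $\mu\in(0,1)$, a sequence $\{\xi_n\}\subset[0,\infty)$ with $\sum_{n}\xi_n<\infty$, $z_1\in H$ and $\lambda_1>0$. For $n=1,2,\dots$: $w_n=P_C(z_n-\lambda_nF(z_n))$; $z_{n+1}=w_n+\lambda_n(F(z_n)-F(w_n))$; $\lambda_{n+1}=\min\{\frac{\mu\|z_n-w_n\|}{\|F(z_n)-F(w_n)\|},\lambda_n+\xi_n\}$ if $F(z_n)\neq F(w_n)$, and $\lambda_{n+1}=\lambda_n+\xi_n$ otherwise. *)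

theory Defs
  imports "HOL-Analysis.Analysis"
begin

definition weak_conv :: "(nat \<Rightarrow> 'a::real_inner) \<Rightarrow> 'a \<Rightarrow> bool" where
  "weak_conv x u \<longleftrightarrow> (\<forall>y. ((\<lambda>n. inner (x n) y) \<longlongrightarrow> inner u y) sequentially)"

definition weak_cluster_point :: "(nat \<Rightarrow> 'a::real_inner) \<Rightarrow> 'a \<Rightarrow> bool" where
  "weak_cluster_point x u \<longleftrightarrow> (\<exists>r. strict_mono r \<and> weak_conv (x \<circ> r) u)"

definition S_D :: "'a::real_inner set \<Rightarrow> ('a \<Rightarrow> 'a) \<Rightarrow> 'a set" where
  "S_D C F = {z \<in> C. \<forall>v\<in>C. inner (F v) (v - z) \<ge> 0}"

definition quasimonotone :: "('a::real_inner \<Rightarrow> 'a) \<Rightarrow> bool" where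
  "quasimonotone F \<longleftrightarrow> (\<forall>w z. inner (F w) (z - w) > 0 \<longrightarrow> inner (F z) (z - w) \<ge> 0)"

text \<open>Metric projection onto C (well defined and unique for C nonempty closed convex in a Hilbert space).\<close>
definition metric_proj :: "'a::real_inner set \<Rightarrow> 'a \<Rightarrow> 'a" where
  "metric_proj C x = (SOME p. p \<in> C \<and> (\<forall>y\<in>C. dist x p \<le> dist x y))"

end

theory Submission
  imports Defs "HOL-Library.Diagonal_Subsequence"
begin

(*
  Fix p in S_D.  As <F(w_n), w_n - p> >= 0, the projection inequality gives the quasi-Fejer estimate
    |z_(n+1) - p|^2 <= |z_n - p|^2 - |z_n - w_n|^2 + lam_n^2 |F z_n - F w_n|^2,
  while lam_(n+1) |F z_n - F w_n| <= mu |z_n - w_n|.  On steps with lam_(n+1) >= sqrt mu * lam_n the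
  last term is at most mu |z_n - w_n|^2.  On the other steps lam drops by a fixed factor; since lam only
  grows by the summable xi_n, the sum of lam_n over these steps is finite.  With the affine growth of the
  uniformly continuous F, a discrete Gronwall argument bounds (z_n), and then sum |z_n - w_n|^2 < oo.
  Moreover |z_n - w_n| / lam_n -> 0 along a subsequence: either lam is eventually nondecreasing, or at the
  infinitely many steps where it decreases lam_(n+1) |F z_n - F w_n| = mu |z_n - w_n|.

  Let u be a weak cluster point of (w_n) along this subsequence.  Then z_n converges weakly to u too, u is
  in C, and the projection inequality gives liminf <F w_n, v - w_n> >= 0 for every v in C.  If F u is
  nonzero, (A4) keeps |F w_n| away from 0, so shifting v slightly along F w_n makes <F w_n, . - w_n>
  positive; quasimonotonicity transfers the sign to F at the shifted points, which converge to v, and in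
  the limit <F v, v - u> >= 0, i.e. u is in S_D.
*)

section \<open>Metric projection and the Riesz representation\<close>

lemma Cauchy_if_dist_sq_le:
  fixes c :: "nat \<Rightarrow> 'a::metric_space"
  assumes dist_le: "\<And>j k. dist (c j) (c k)^2 \<le> e j + e k" and "e \<longlonglongrightarrow> 0"
  shows "Cauchy c"
proof (rule metric_CauchyI)
  fix \<epsilon> :: real assume "\<epsilon> > 0"
  then obtain M where M: "\<And>k. k \<ge> M \<Longrightarrow> e k < \<epsilon>^2 / 2"
    using order_tendstoD(2)[OF \<open>e \<longlonglongrightarrow> 0\<close>, of "\<epsilon>^2 / 2"] by (auto simp: eventually_sequentially)
  have "dist (c j) (c k) < \<epsilon>" if "j \<ge> M" "k \<ge> M" for j k
  proof -
    have "dist (c j) (c k)^2 < \<epsilon>^2"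
      using dist_le[of j k] M[OF \<open>j \<ge> M\<close>] M[OF \<open>k \<ge> M\<close>] by simp
    then show ?thesis using \<open>\<epsilon> > 0\<close> by (simp add: power_less_imp_less_base)
  qed
  then show "\<exists>M. \<forall>m\<ge>M. \<forall>n\<ge>M. dist (c m) (c n) < \<epsilon>" by blast
qed

lemma norm_diff_sq_le_if_midpoint_far:
  fixes x a b :: "'a::real_inner"
  assumes "0 \<le> d" and "d \<le> norm (x - midpoint a b)"
  shows "norm (a - b)^2 \<le> 2 * (norm (x - a)^2 - d^2) + 2 * (norm (x - b)^2 - d^2)"
proof -
  have "(x - a) + (x - b) = 2 *\<^sub>R (x - midpoint a b)"
    by (simp add: midpoint_def scaleR_right_diff_distrib scaleR_2 algebra_simps)
  then have "(2 * d)^2 \<le> norm ((x - a) + (x - b))^2"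
    using assms by (intro power_mono) auto
  moreover have "norm (a - b)^2 = 2 * norm (x - a)^2 + 2 * norm (x - b)^2 - norm ((x - a) + (x - b))^2"
    by (simp add: power2_norm_eq_inner inner_simps algebra_simps)
  ultimately show ?thesis by (simp add: power_mult_distrib)
qed

lemma infdist_minimizing_sequence:
  assumes "A \<noteq> {}"
  obtains c where "\<And>k. c k \<in> A" and "(\<lambda>k. dist x (c k)) \<longlonglongrightarrow> infdist x A"
proof -
  have "\<exists>c\<in>A. dist x c < infdist x A + 1 / Suc k" for k
  proof -
    have "infdist x A < infdist x A + 1 / Suc k" by simp
    then show ?thesis
      unfolding infdist_notempty[OF assms] using cInf_lessD[of "dist x ` A"] assms by blast
  qed
  then obtain c where c_in: "\<And>k. c k \<in> A" and c_close: "\<And>k. dist x (c k) < infdist x A + 1 / Suc k"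
    by metis
  have "(\<lambda>k. dist x (c k)) \<longlonglongrightarrow> infdist x A"
  proof (rule tendsto_sandwich)
    show "\<forall>\<^sub>F k in sequentially. infdist x A \<le> dist x (c k)"
      using c_in by (simp add: infdist_le)
    show "\<forall>\<^sub>F k in sequentially. dist x (c k) \<le> infdist x A + 1 / Suc k"
      using c_close by (simp add: less_imp_le)
    show "(\<lambda>k. infdist x A + 1 / Suc k) \<longlonglongrightarrow> infdist x A"
      using tendsto_add[OF tendsto_const LIMSEQ_inverse_real_of_nat] by (simp add: inverse_eq_divide)
  qed simp
  with c_in show ?thesis by (rule that)
qed

lemma closest_point_exists_convex:
  fixes C :: "'a::{real_inner,complete_space} set"
  assumes "C \<noteq> {}" and "closed C" and "convex C"
  shows "\<exists>p\<in>C. \<forall>y\<in>C. dist x p \<le> dist x y"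
proof -
  define d where "d = infdist x C"
  have "0 \<le> d" unfolding d_def by (rule infdist_nonneg)
  have d_le: "d \<le> dist x y" if "y \<in> C" for y
    unfolding d_def using that by (rule infdist_le)
  obtain c where c_in: "\<And>k. c k \<in> C" and "(\<lambda>k. dist x (c k)) \<longlonglongrightarrow> d"
    unfolding d_def using infdist_minimizing_sequence[OF \<open>C \<noteq> {}\<close>] by blast
  have "Cauchy c"
  proof (rule Cauchy_if_dist_sq_le[where e = "\<lambda>k. 2 * (dist x (c k)^2 - d^2)"])
    show "dist (c j) (c k)^2 \<le> 2 * (dist x (c j)^2 - d^2) + 2 * (dist x (c k)^2 - d^2)" for j k
    proof -
      have "midpoint (c j) (c k) \<in> C"
        using \<open>convex C\<close> c_in midpoint_in_closed_segment by (metis convex_contains_segment subsetD)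
      then have "d \<le> norm (x - midpoint (c j) (c k))" using d_le by (simp add: dist_norm)
      from norm_diff_sq_le_if_midpoint_far[OF \<open>0 \<le> d\<close> this] show ?thesis
        by (simp add: dist_norm)
    qed
    have "(\<lambda>k. 2 * (dist x (c k)^2 - d^2)) \<longlonglongrightarrow> 2 * (d^2 - d^2)"
      using \<open>(\<lambda>k. dist x (c k)) \<longlonglongrightarrow> d\<close> by (intro tendsto_intros)
    then show "(\<lambda>k. 2 * (dist x (c k)^2 - d^2)) \<longlonglongrightarrow> 0" by simp
  qed
  then obtain p where "c \<longlonglongrightarrow> p" using Cauchy_convergent_iff convergent_def by blast
  then have "p \<in> C" using \<open>closed C\<close> c_in closed_sequentially by blast
  moreover have "dist x p = d"
    using \<open>(\<lambda>k. dist x (c k)) \<longlonglongrightarrow> d\<close> tendsto_dist[OF tendsto_const \<open>c \<longlonglongrightarrow> p\<close>] LIMSEQ_unique by blast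
  ultimately show ?thesis using d_le by auto
qed

context
  fixes C :: "'a::{real_inner,complete_space} set"
  assumes C_ne: "C \<noteq> {}" and C_closed: "closed C" and C_convex: "convex C"
begin

lemma metric_proj_in: "metric_proj C x \<in> C"
  and metric_proj_le_dist: "y \<in> C \<Longrightarrow> dist x (metric_proj C x) \<le> dist x y"
proof -
  have "\<exists>p. p \<in> C \<and> (\<forall>y\<in>C. dist x p \<le> dist x y)"
    using closest_point_exists_convex[OF C_ne C_closed C_convex] by blast
  then have "metric_proj C x \<in> C \<and> (\<forall>y\<in>C. dist x (metric_proj C x) \<le> dist x y)"
    unfolding metric_proj_def by (rule someI_ex)
  then show "metric_proj C x \<in> C" "y \<in> C \<Longrightarrow> dist x (metric_proj C x) \<le> dist x y" by auto
qed

lemma metric_proj_variational_ineq: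
  assumes "y \<in> C"
  shows "inner (x - metric_proj C x) (y - metric_proj C x) \<le> 0"
proof -
  let ?p = "metric_proj C x"
  have "2 * inner (x - ?p) (y - ?p) \<le> t * norm (y - ?p)^2" if "0 < t" "t < 1" for t
  proof -
    have "?p + t *\<^sub>R (y - ?p) = (1 - t) *\<^sub>R ?p + t *\<^sub>R y" by (simp add: algebra_simps)
    also have "\<dots> \<in> C" using C_convex metric_proj_in assms that unfolding convex_def by auto
    finally have "norm (x - ?p)^2 \<le> norm ((x - ?p) - t *\<^sub>R (y - ?p))^2"
      using metric_proj_le_dist by (simp add: dist_norm power_mono diff_diff_eq)
    also have "\<dots> = norm (x - ?p)^2 - t * (2 * inner (x - ?p) (y - ?p)) + t * (t * norm (y - ?p)^2)"
      unfolding power2_norm_eq_inner by (simp add: inner_simps algebra_simps inner_commute)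
    finally have "t * (2 * inner (x - ?p) (y - ?p)) \<le> t * (t * norm (y - ?p)^2)" by linarith
    then show ?thesis using \<open>0 < t\<close> by (simp only: mult_le_cancel_left_pos)
  qed
  then have "\<forall>\<^sub>F t in at_right 0. 2 * inner (x - ?p) (y - ?p) \<le> t * norm (y - ?p)^2"
    using eventually_at_right_real[of 0 1] by (auto elim: eventually_mono)
  moreover have "((\<lambda>t. t * norm (y - ?p)^2) \<longlongrightarrow> 0) (at_right 0)"
    by (auto intro!: tendsto_eq_intros)
  ultimately have "2 * inner (x - ?p) (y - ?p) \<le> 0"
    by (intro tendsto_lowerbound[of "\<lambda>t. t * norm (y - ?p)^2"]) (use trivial_limit_at_right_real in \<open>auto simp: trivial_limit_def\<close>)
  then show ?thesis by simp
qed

lemma norm_metric_proj_diff_le: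
  assumes "p \<in> C"
  shows "norm (metric_proj C y - p) \<le> norm (y - p)"
proof -
  let ?q = "metric_proj C y"
  have "norm (?q - p)^2 = inner (y - p) (?q - p) + inner (y - ?q) (p - ?q)"
    by (simp add: power2_norm_eq_inner inner_simps algebra_simps)
  also have "\<dots> \<le> inner (y - p) (?q - p)"
    using metric_proj_variational_ineq[OF assms] by simp
  also have "\<dots> \<le> norm (y - p) * norm (?q - p)"
    by (rule order_trans[OF abs_ge_self Cauchy_Schwarz_ineq2])
  finally show ?thesis
    by (cases "?q = p") (auto simp: power2_eq_square mult_le_cancel_right)
qed

end

lemma metric_proj_in_subspace:
  fixes M :: "'a::{real_inner,complete_space} set"
  assumes "subspace M" and "closed M"
  shows "metric_proj M y \<in> M"
  using assms subspace_0 subspace_imp_convex by (intro metric_proj_in) auto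

lemma metric_proj_orthogonal:
  fixes M :: "'a::{real_inner,complete_space} set"
  assumes "subspace M" and "closed M" and "m \<in> M"
  shows "inner (y - metric_proj M y) m = 0"
proof -
  have props: "M \<noteq> {}" "closed M" "convex M"
    using assms subspace_0 subspace_imp_convex by auto
  let ?q = "metric_proj M y"
  have "?q + m \<in> M" "?q - m \<in> M"
    using assms metric_proj_in[OF props] by (auto intro: subspace_add subspace_diff)
  then have "inner (y - ?q) ((?q + m) - ?q) \<le> 0" "inner (y - ?q) ((?q - m) - ?q) \<le> 0"
    by (simp_all only: metric_proj_variational_ineq[OF props])
  then show ?thesis by (simp add: inner_simps)
qed

lemma subspace_closure:
  fixes S :: "'a::real_normed_vector set"
  assumes "subspace S"
  shows "subspace (closure S)"
  unfolding subspace_def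
proof (intro conjI ballI allI)
  show "0 \<in> closure S" using assms subspace_0 closure_subset by blast
next
  fix x y assume "x \<in> closure S" "y \<in> closure S"
  then obtain a b where "\<And>n. a n \<in> S" "a \<longlonglongrightarrow> x" "\<And>n. b n \<in> S" "b \<longlonglongrightarrow> y"
    unfolding closure_sequential by blast
  then show "x + y \<in> closure S"
    unfolding closure_sequential using assms by (intro exI[of _ "\<lambda>n. a n + b n"]) (auto intro: tendsto_add subspace_add)
next
  fix c :: real and x assume "x \<in> closure S"
  then obtain a where "\<And>n. a n \<in> S" "a \<longlonglongrightarrow> x"
    unfolding closure_sequential by blast
  then show "c *\<^sub>R x \<in> closure S"
    unfolding closure_sequential using assms by (intro exI[of _ "\<lambda>n. c *\<^sub>R a n"]) (auto intro: tendsto_scaleR subspace_mul)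
qed

lemma bounded_linear_inner_representation:
  fixes L :: "'a::{real_inner,complete_space} \<Rightarrow> real"
  assumes "bounded_linear L"
  obtains u where "\<And>y. L y = inner u y"
proof (cases "\<forall>y. L y = 0")
  case True
  then show ?thesis by (intro that[of 0]) simp
next
  case False
  then obtain y0 where "L y0 \<noteq> 0" by blast
  interpret L: bounded_linear L by (rule assms)
  define N where "N = L -` {0}"
  have "closed N" unfolding N_def
    by (intro continuous_closed_vimage closed_singleton) (simp add: linear_continuous_at[OF assms])
  have "subspace N" unfolding N_def subspace_def by (auto simp: L.add L.scaleR)
  define e where "e = y0 - metric_proj N y0"
  have "metric_proj N y0 \<in> N"
    using \<open>subspace N\<close> \<open>closed N\<close> by (rule metric_proj_in_subspace)
  then have Le: "L e = L y0" unfolding e_def N_def by (simp add: L.diff)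
  have e_orth: "inner e n = 0" if "n \<in> N" for n
    unfolding e_def using \<open>subspace N\<close> \<open>closed N\<close> that by (rule metric_proj_orthogonal)
  have "e \<noteq> 0" using Le \<open>L y0 \<noteq> 0\<close> L.zero by auto
  have "L y = inner ((L e / inner e e) *\<^sub>R e) y" for y
  proof -
    have "y - (L y / L e) *\<^sub>R e \<in> N" unfolding N_def using Le \<open>L y0 \<noteq> 0\<close> by (simp add: L.diff L.scaleR)
    then have "inner e (y - (L y / L e) *\<^sub>R e) = 0" by (rule e_orth)
    then have "inner e y = (L y / L e) * inner e e" by (simp add: inner_simps)
    then show ?thesis using \<open>e \<noteq> 0\<close> Le \<open>L y0 \<noteq> 0\<close> by (simp add: field_simps)
  qed
  then show ?thesis by (rule that)
qed

section \<open>Weak sequential compactness\<close>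

lemma bounded_subseq_inner_convergent:
  fixes x :: "nat \<Rightarrow> 'a::real_inner"
  assumes "bounded (range x)"
  obtains r where "strict_mono r" and "\<And>m. convergent (\<lambda>n. inner (x (r n)) (x m))"
proof -
  obtain B where B: "\<And>n. norm (x n) \<le> B" using assms by (auto simp: bounded_iff)
  define P where "P = (\<lambda>m (s::nat \<Rightarrow> nat). convergent (\<lambda>n. inner (x (s n)) (x m)))"
  interpret subseqs P
  proof
    fix m and s :: "nat \<Rightarrow> nat"
    have "norm (inner (x (s n)) (x m)) \<le> B * B" for n
    proof -
      have "norm (inner (x (s n)) (x m)) \<le> norm (x (s n)) * norm (x m)"
        unfolding real_norm_def by (rule Cauchy_Schwarz_ineq2)
      also have "\<dots> \<le> B * B"
        by (intro mult_mono B norm_ge_zero order_trans[OF norm_ge_zero B])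
      finally show ?thesis .
    qed
    then have "bounded (range (\<lambda>n. inner (x (s n)) (x m)))" by (auto simp: bounded_iff)
    then obtain l r where "strict_mono r" "((\<lambda>n. inner (x (s n)) (x m)) \<circ> r) \<longlonglongrightarrow> l"
      using bounded_imp_convergent_subsequence by blast
    then show "\<exists>r. strict_mono r \<and> P m (s \<circ> r)"
      unfolding P_def convergent_def by (auto simp: o_def)
  qed
  have "P m (diagseq \<circ> (+) (Suc m))" for m
  proof (rule diagseq_holds)
    fix r s n assume "strict_mono (r :: nat \<Rightarrow> nat)" "P n s"
    then show "P n (s \<circ> r)" unfolding P_def convergent_def using LIMSEQ_subseq_LIMSEQ by (fastforce simp: o_def)
  qed
  then have "convergent (\<lambda>n. inner (x (diagseq n)) (x m))" for m
  proof -
    obtain l where "(\<lambda>n. inner (x (diagseq (n + Suc m))) (x m)) \<longlonglongrightarrow> l"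
      using \<open>P m (diagseq \<circ> (+) (Suc m))\<close> unfolding P_def convergent_def by (auto simp: o_def add.commute)
    then show ?thesis unfolding convergent_def by (blast intro: LIMSEQ_offset)
  qed
  then show ?thesis using subseq_diagseq that by blast
qed

lemma subspace_inner_convergent: "subspace {y. convergent (\<lambda>n. inner (x n) y)}"
  unfolding subspace_def
  by (auto simp: inner_add_right intro: convergent_add convergent_mult convergent_const)

lemma closed_inner_convergent:
  fixes x :: "nat \<Rightarrow> 'a::real_inner"
  assumes "bounded (range x)"
  shows "closed {y. convergent (\<lambda>n. inner (x n) y)}"
proof -
  obtain B where "B > 0" and B: "\<And>n. norm (x n) \<le> B"
    using assms by (auto simp: bounded_pos)
  have "y \<in> {y. convergent (\<lambda>n. inner (x n) y)}"
    if y: "y \<in> closure {y. convergent (\<lambda>n. inner (x n) y)}" for y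
  proof -
    have "Cauchy (\<lambda>n. inner (x n) y)"
    proof (rule metric_CauchyI)
      fix \<epsilon> :: real assume "\<epsilon> > 0"
      then have "\<epsilon> / (3 * B) > 0" using \<open>B > 0\<close> by simp
      then obtain g where g: "convergent (\<lambda>n. inner (x n) g)" and "dist g y < \<epsilon> / (3 * B)"
        using y unfolding closure_approachable by blast
      have close: "\<bar>inner (x n) y - inner (x n) g\<bar> \<le> \<epsilon> / 3" for n
      proof -
        have "\<bar>inner (x n) (y - g)\<bar> \<le> norm (x n) * norm (y - g)" by (rule Cauchy_Schwarz_ineq2)
        also have "\<dots> \<le> B * (\<epsilon> / (3 * B))"
          using B[of n] \<open>B > 0\<close> \<open>dist g y < \<epsilon> / (3 * B)\<close> by (intro mult_mono) (auto simp: dist_norm norm_minus_commute)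
        finally show ?thesis using \<open>B > 0\<close> by (simp add: inner_diff_right)
      qed
      have "\<epsilon> / 3 > 0" using \<open>\<epsilon> > 0\<close> by simp
      then obtain M where M: "\<And>m n. m \<ge> M \<Longrightarrow> n \<ge> M \<Longrightarrow> dist (inner (x m) g) (inner (x n) g) < \<epsilon> / 3"
        using convergent_Cauchy[OF g] unfolding Cauchy_def by blast
      have "dist (inner (x m) y) (inner (x n) y) < \<epsilon>" if "m \<ge> M" "n \<ge> M" for m n
        using M[OF that] close[of m] close[of n] unfolding dist_real_def by linarith
      then show "\<exists>M. \<forall>m\<ge>M. \<forall>n\<ge>M. dist (inner (x m) y) (inner (x n) y) < \<epsilon>" by blast
    qed
    then show ?thesis by (simp add: Cauchy_convergent_iff)
  qed
  then show ?thesis unfolding closure_subset_eq[symmetric] by blast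
qed

lemma convergent_inner_if_convergent_on_range:
  fixes x :: "nat \<Rightarrow> 'a::{real_inner,complete_space}"
  assumes "bounded (range x)" and "\<And>m. convergent (\<lambda>n. inner (x n) (x m))"
  shows "convergent (\<lambda>n. inner (x n) y)"
proof -
  define G where "G = {y. convergent (\<lambda>n. inner (x n) y)}"
  define M where "M = closure (span (range x))"
  have "M \<subseteq> G" unfolding M_def G_def
    using assms by (intro closure_minimal span_minimal subspace_inner_convergent closed_inner_convergent) auto
  have M: "subspace M" "closed M" unfolding M_def by (auto intro: subspace_closure)
  let ?q = "metric_proj M y"
  have "x n \<in> M" for n
    unfolding M_def by (meson closure_subset rangeI span_base subsetD)
  then have "inner (x n) (y - ?q) = 0" for n
    using metric_proj_orthogonal[OF M] by (simp add: inner_commute)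
  then have "y - ?q \<in> G" by (simp add: G_def convergent_const)
  moreover have "?q \<in> G" using metric_proj_in_subspace[OF M] \<open>M \<subseteq> G\<close> by blast
  ultimately have "?q + (y - ?q) \<in> G"
    using subspace_add[OF subspace_inner_convergent[of x]] unfolding G_def by blast
  then show ?thesis by (simp add: G_def)
qed

lemma weak_conv_if_inner_convergent:
  fixes x :: "nat \<Rightarrow> 'a::{real_inner,complete_space}"
  assumes "bounded (range x)" and "\<And>y. convergent (\<lambda>n. inner (x n) y)"
  obtains u where "weak_conv x u"
proof -
  have lim: "(\<lambda>n. inner (x n) y) \<longlonglongrightarrow> lim (\<lambda>n. inner (x n) y)" for y
    using assms(2) by (simp add: convergent_LIMSEQ_iff)
  obtain B where B: "\<And>n. norm (x n) \<le> B" using assms by (auto simp: bounded_iff)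
  have "bounded_linear (\<lambda>y. lim (\<lambda>n. inner (x n) y))"
  proof (rule bounded_linear_intro)
    show "lim (\<lambda>n. inner (x n) (a + b)) = lim (\<lambda>n. inner (x n) a) + lim (\<lambda>n. inner (x n) b)" for a b
      using tendsto_add[OF lim lim] by (intro limI) (simp add: inner_add_right)
    show "lim (\<lambda>n. inner (x n) (c *\<^sub>R a)) = c *\<^sub>R lim (\<lambda>n. inner (x n) a)" for c a
      using tendsto_mult[OF tendsto_const lim] by (intro limI) simp
    show "norm (lim (\<lambda>n. inner (x n) y)) \<le> norm y * B" for y
    proof (rule LIMSEQ_le_const2)
      show "(\<lambda>n. norm (inner (x n) y)) \<longlonglongrightarrow> norm (lim (\<lambda>n. inner (x n) y))"
        by (intro tendsto_intros lim)
      show "\<exists>N. \<forall>n\<ge>N. norm (inner (x n) y) \<le> norm y * B"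
        using order_trans[OF Cauchy_Schwarz_ineq2 mult_right_mono[OF B]] by (auto simp: mult.commute)
    qed
  qed
  then obtain u where "\<And>y. lim (\<lambda>n. inner (x n) y) = inner u y"
    using bounded_linear_inner_representation by blast
  then have "weak_conv x u" unfolding weak_conv_def using lim by simp
  then show ?thesis by (rule that)
qed

lemma bounded_imp_weak_convergent_subseq:
  fixes x :: "nat \<Rightarrow> 'a::{real_inner,complete_space}"
  assumes "bounded (range x)"
  obtains r u where "strict_mono r" and "weak_conv (x \<circ> r) u"
proof -
  obtain r where "strict_mono r" and conv: "\<And>m. convergent (\<lambda>n. inner (x (r n)) (x m))"
    using bounded_subseq_inner_convergent[OF assms] by blast
  moreover have "bounded (range (x \<circ> r))"
    using assms by (rule bounded_subset) auto
  moreover have "convergent (\<lambda>n. inner ((x \<circ> r) n) ((x \<circ> r) m))" for m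
    using conv by simp
  ultimately show ?thesis
    using weak_conv_if_inner_convergent convergent_inner_if_convergent_on_range that by metis
qed

lemma weak_conv_limit_in_closed_convex:
  fixes C :: "'a::{real_inner,complete_space} set"
  assumes "closed C" and "convex C" and x_in: "\<And>n. x n \<in> C" and "weak_conv x u"
  shows "u \<in> C"
proof -
  have C: "C \<noteq> {}" "closed C" "convex C" using assms by auto
  let ?q = "metric_proj C u"
  have "(\<lambda>n. inner (x n) (u - ?q) - inner ?q (u - ?q)) \<longlonglongrightarrow> inner u (u - ?q) - inner ?q (u - ?q)"
    using \<open>weak_conv x u\<close> unfolding weak_conv_def by (intro tendsto_diff tendsto_const) auto
  moreover have "inner (u - ?q) (v - ?q) = inner v (u - ?q) - inner ?q (u - ?q)" for v
    by (simp add: inner_commute inner_diff_right)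
  ultimately have "(\<lambda>n. inner (u - ?q) (x n - ?q)) \<longlonglongrightarrow> inner (u - ?q) (u - ?q)"
    by (simp only:)
  moreover have "inner (u - ?q) (x n - ?q) \<le> 0" for n
    using x_in by (rule metric_proj_variational_ineq[OF C])
  ultimately have "inner (u - ?q) (u - ?q) \<le> 0" by (intro LIMSEQ_le_const2) auto
  then have "u - ?q = 0" by (metis inner_eq_zero_iff inner_ge_zero order.antisym)
  then have "?q = u" by (simp only: right_minus_eq)
  then show ?thesis using metric_proj_in[OF C, of u] by (simp only:)
qed

lemma weak_conv_if_norm_diff_tendsto_0:
  assumes "weak_conv x u" and "(\<lambda>n. norm (y n - x n)) \<longlonglongrightarrow> 0"
  shows "weak_conv y u"
  unfolding weak_conv_def
proof
  fix v
  have "(\<lambda>n. inner (y n - x n) v) \<longlonglongrightarrow> 0"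
  proof (rule Lim_null_comparison)
    show "\<forall>\<^sub>F n in sequentially. norm (inner (y n - x n) v) \<le> norm (y n - x n) * norm v"
      by (simp add: Cauchy_Schwarz_ineq2)
    show "(\<lambda>n. norm (y n - x n) * norm v) \<longlonglongrightarrow> 0"
      using assms(2) by (rule tendsto_mult_left_zero)
  qed
  then have "(\<lambda>n. inner (x n) v + inner (y n - x n) v) \<longlonglongrightarrow> inner u v + 0"
    using assms(1) unfolding weak_conv_def by (intro tendsto_add) auto
  then show "(\<lambda>n. inner (y n) v) \<longlonglongrightarrow> inner u v" by (simp add: inner_diff_left)
qed

section \<open>Elementary estimates and quasimonotonicity\<close>

lemma uniformly_continuous_on_UNIV_affine_bound:
  fixes f :: "'a::real_normed_vector \<Rightarrow> 'b::real_normed_vector"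
  assumes "uniformly_continuous_on UNIV f"
  obtains B where "B \<ge> 0" and "\<And>x y. norm (f x - f y) \<le> 1 + B * norm (x - y)"
proof -
  obtain \<delta> where "\<delta> > 0" and \<delta>: "\<And>x y. dist x y < \<delta> \<Longrightarrow> dist (f x) (f y) < 1"
    using assms unfolding uniformly_continuous_on_def by (metis UNIV_I zero_less_one)
  have "norm (f x - f y) \<le> 1 + (1 / \<delta>) * norm (x - y)" for x y
  proof -
    define q where "q = norm (x - y) / \<delta>"
    have "0 \<le> q" using \<open>\<delta> > 0\<close> by (simp add: q_def)
    then have floor_eq: "real (nat \<lfloor>q\<rfloor>) = of_int \<lfloor>q\<rfloor>" by simp
    have fl1: "real (nat \<lfloor>q\<rfloor>) \<le> q" unfolding floor_eq by (rule of_int_floor_le)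
    have fl2: "q < real (nat \<lfloor>q\<rfloor>) + 1" unfolding floor_eq by (rule real_of_int_floor_add_one_gt)
    define n where "n = Suc (nat \<lfloor>q\<rfloor>)"
    have "q < n" and n_le: "n \<le> 1 + q"
      unfolding n_def of_nat_Suc using fl1 fl2 by linarith+
    then have "norm (x - y) < \<delta> * n"
      using \<open>\<delta> > 0\<close> by (simp add: q_def field_simps)
    then have "norm (x - y) / n < \<delta>"
      by (simp add: n_def field_simps)
    define p where "p k = y + (real k / real n) *\<^sub>R (x - y)" for k
    have "p (Suc k) - p k = ((real (Suc k) - real k) / n) *\<^sub>R (x - y)" for k
      unfolding p_def by (simp only: diff_divide_distrib scaleR_diff_left) simp
    then have "dist (p (Suc k)) (p k) < \<delta>" for k
      using \<open>norm (x - y) / n < \<delta>\<close> by (simp add: dist_norm)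
    then have step: "norm (f (p (Suc k)) - f (p k)) \<le> 1" for k
      using \<delta> by (simp add: dist_norm less_imp_le)
    have "p n = x" "p 0 = y" by (simp_all add: p_def n_def)
    then have "f x - f y = (\<Sum>k<n. f (p (Suc k)) - f (p k))"
      using sum_lessThan_telescope[of "\<lambda>k. f (p k)" n] by simp
    then have "norm (f x - f y) \<le> (\<Sum>k<n. norm (f (p (Suc k)) - f (p k)))"
      by (simp add: norm_sum)
    also have "\<dots> \<le> n" using sum_bounded_above[of "{..<n}", OF step] by simp
    finally show ?thesis using n_le by (simp add: q_def field_simps)
  qed
  then show ?thesis using \<open>\<delta> > 0\<close> that[of "1 / \<delta>"] by simp
qed

lemma discrete_gronwall:
  fixes a b :: "nat \<Rightarrow> real"
  assumes step: "\<And>n. a (Suc n) \<le> (1 + b n) * a n" and nonneg: "\<And>n. 0 \<le> a n"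
  shows "a n \<le> a 0 * exp (\<Sum>j<n. b j)"
proof (induction n)
  case (Suc n)
  have "(1 + b n) * a n \<le> exp (b n) * a n"
    using exp_ge_add_one_self[of "b n"] nonneg[of n] by (intro mult_right_mono) (simp_all add: add.commute)
  with step[of n] have "a (Suc n) \<le> exp (b n) * a n" by (rule order_trans)
  also have "\<dots> \<le> exp (b n) * (a 0 * exp (\<Sum>j<n. b j))"
    using Suc.IH by simp
  also have "\<dots> = a 0 * exp (\<Sum>j<Suc n. b j)"
    by (simp add: exp_add)
  finally show ?case .
qed simp

lemma sum_shrinking_steps_le:
  fixes lam xi :: "nat \<Rightarrow> real" and \<theta> :: real
  assumes "\<And>n. lam (Suc n) \<le> lam n + xi n" and "\<And>n. 0 \<le> xi n"
  shows "lam n + (1 - \<theta>) * (\<Sum>j<n. if lam (Suc j) < \<theta> * lam j then lam j else 0)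
           \<le> lam 0 + (\<Sum>j<n. xi j)"
proof (induction n)
  case (Suc n)
  have "lam (Suc n) + (1 - \<theta>) * (if lam (Suc n) < \<theta> * lam n then lam n else 0) \<le> lam n + xi n"
    using assms[of n] by (auto simp: algebra_simps)
  then show ?case using Suc.IH by (simp add: algebra_simps)
qed simp

lemma tendsto_inner_strong_weak:
  fixes F :: "'a::real_inner \<Rightarrow> 'a"
  assumes "isCont F v" and "h \<longlonglongrightarrow> v" and "weak_conv W u" and "bounded (range W)"
  shows "(\<lambda>k. inner (F (h k)) (h k - W k)) \<longlonglongrightarrow> inner (F v) (v - u)"
proof -
  obtain Mh where Mh: "\<And>k. norm (h k) \<le> Mh"
    using convergent_imp_Bseq[OF convergentI[OF \<open>h \<longlonglongrightarrow> v\<close>]] unfolding Bseq_def by blast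
  obtain MW where MW: "\<And>k. norm (W k) \<le> MW"
    using \<open>bounded (range W)\<close> by (auto simp: bounded_iff)
  have "(\<lambda>k. inner (F (h k) - F v) (h k - W k)) \<longlonglongrightarrow> 0"
  proof (rule Lim_null_comparison)
    show "\<forall>\<^sub>F k in sequentially. norm (inner (F (h k) - F v) (h k - W k)) \<le> norm (F (h k) - F v) * (Mh + MW)"
    proof (intro always_eventually allI)
      fix k
      have "norm (inner (F (h k) - F v) (h k - W k)) \<le> norm (F (h k) - F v) * norm (h k - W k)"
        using Cauchy_Schwarz_ineq2 by simp
      also have "\<dots> \<le> norm (F (h k) - F v) * (Mh + MW)"
        using norm_triangle_ineq4[of "h k" "W k"] Mh[of k] MW[of k] by (intro mult_left_mono) auto
      finally show "norm (inner (F (h k) - F v) (h k - W k)) \<le> norm (F (h k) - F v) * (Mh + MW)" .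
    qed
    have "(\<lambda>k. F (h k)) \<longlonglongrightarrow> F v"
      using assms(1,2) by (rule isCont_tendsto_compose)
    then show "(\<lambda>k. norm (F (h k) - F v) * (Mh + MW)) \<longlonglongrightarrow> 0"
      by (intro tendsto_mult_left_zero tendsto_norm_zero LIM_zero)
  qed
  moreover have "(\<lambda>k. inner (F v) (h k - v)) \<longlonglongrightarrow> 0"
    using tendsto_inner[OF tendsto_const LIM_zero[OF \<open>h \<longlonglongrightarrow> v\<close>], of "F v"] by simp
  moreover have "(\<lambda>k. inner (F v) v - inner (W k) (F v)) \<longlonglongrightarrow> inner (F v) v - inner u (F v)"
    using \<open>weak_conv W u\<close> unfolding weak_conv_def by (intro tendsto_diff tendsto_const) auto
  then have "(\<lambda>k. inner (F v) (v - W k)) \<longlonglongrightarrow> inner (F v) (v - u)"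
    by (simp add: inner_diff_right inner_commute)
  ultimately have "(\<lambda>k. inner (F v) (v - W k) + inner (F v) (h k - v) + inner (F (h k) - F v) (h k - W k))
      \<longlonglongrightarrow> inner (F v) (v - u) + 0 + 0"
    by (intro tendsto_add)
  moreover have "inner (F v) (v - W k) + inner (F v) (h k - v) + inner (F (h k) - F v) (h k - W k)
      = inner (F (h k)) (h k - W k)" for k
    by (simp add: inner_diff_left inner_diff_right)
  ultimately show ?thesis by simp
qed

lemma quasimonotone_shift_nonneg:
  fixes F :: "'a::real_inner \<Rightarrow> 'a"
  assumes "quasimonotone F" and "F w \<noteq> 0" and "- inner (F w) (v - w) < \<epsilon>"
  defines "h \<equiv> v + (\<epsilon> / norm (F w)^2) *\<^sub>R F w"
  shows "0 \<le> inner (F h) (h - w)"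
proof -
  have "inner (F w) (h - w) = inner (F w) (v - w) + \<epsilon>"
    using assms(2) by (simp add: h_def inner_add_right inner_diff_right power2_norm_eq_inner)
  also have "\<dots> > 0" using assms(3) by simp
  finally show ?thesis using assms(1) unfolding quasimonotone_def by blast
qed

lemma quasimonotone_minty_limit:
  fixes F :: "'a::real_inner \<Rightarrow> 'a"
  assumes qm: "quasimonotone F" and "isCont F v"
    and "weak_conv W u" and "bounded (range W)"
    and "c > 0" and large: "\<forall>\<^sub>F k in sequentially. c \<le> norm (F (W k))"
    and lb: "\<And>k. - b k \<le> inner (F (W k)) (v - W k)" and "b \<longlonglongrightarrow> 0"
  shows "0 \<le> inner (F v) (v - u)"
proof -
  define \<epsilon> where "\<epsilon> = (\<lambda>k. \<bar>b k\<bar> + 1 / Suc k)"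
  have "\<epsilon> \<longlonglongrightarrow> 0"
    using tendsto_add[OF tendsto_rabs_zero[OF \<open>b \<longlonglongrightarrow> 0\<close>] LIMSEQ_inverse_real_of_nat]
    by (simp add: \<epsilon>_def inverse_eq_divide)
  have "- inner (F (W k)) (v - W k) < \<epsilon> k" for k
  proof -
    have "- b k \<le> \<bar>b k\<bar>" "0 < 1 / real (Suc k)" "\<epsilon> k = \<bar>b k\<bar> + 1 / real (Suc k)"
      by (simp_all add: \<epsilon>_def)
    then show ?thesis using lb[of k] by linarith
  qed
  define h where "h k = v + (\<epsilon> k / norm (F (W k))^2) *\<^sub>R F (W k)" for k
  have quasi: "\<forall>\<^sub>F k in sequentially. 0 \<le> inner (F (h k)) (h k - W k)"
    using large
  proof eventually_elim
    case (elim k)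
    then have "F (W k) \<noteq> 0" using \<open>c > 0\<close> by auto
    with qm show ?case
      unfolding h_def using \<open>- inner (F (W k)) (v - W k) < \<epsilon> k\<close> by (rule quasimonotone_shift_nonneg)
  qed
  have "h \<longlonglongrightarrow> v"
  proof (rule LIM_zero_cancel, rule Lim_null_comparison)
    show "\<forall>\<^sub>F k in sequentially. norm (h k - v) \<le> \<epsilon> k / c"
      using large
    proof eventually_elim
      case (elim k)
      then have "norm (h k - v) = \<epsilon> k / norm (F (W k))"
        using \<open>c > 0\<close> by (simp add: h_def \<epsilon>_def power2_eq_square)
      also have "\<dots> \<le> \<epsilon> k / c"
        using elim \<open>c > 0\<close> by (intro divide_left_mono) (auto simp: \<epsilon>_def intro!: mult_pos_pos)
      finally show ?case .
    qed
    show "(\<lambda>k. \<epsilon> k / c) \<longlonglongrightarrow> 0"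
      using \<open>\<epsilon> \<longlonglongrightarrow> 0\<close> by (rule tendsto_divide_zero)
  qed
  then have "(\<lambda>k. inner (F (h k)) (h k - W k)) \<longlonglongrightarrow> inner (F v) (v - u)"
    using assms(2-4) by (intro tendsto_inner_strong_weak)
  then show ?thesis using quasi by (rule tendsto_lowerbound) simp
qed

section \<open>The adaptive iteration\<close>

locale adaptive_tseng =
  fixes C :: "'a::{real_inner,complete_space} set"
    and F :: "'a \<Rightarrow> 'a"
    and z w :: "nat \<Rightarrow> 'a"
    and lam xi :: "nat \<Rightarrow> real"
    and mu :: real
    and p :: 'a
  assumes C_closed: "closed C" and C_convex: "convex C"
    and p_SD: "p \<in> S_D C F"
    and F_uc: "uniformly_continuous_on UNIV F"
    and mu: "0 < mu" "mu < 1"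
    and xi_nonneg: "\<And>n. xi n \<ge> 0" and xi_sum: "summable xi"
    and lam0: "lam 0 > 0"
    and w_def: "\<And>n. w n = metric_proj C (z n - lam n *\<^sub>R F (z n))"
    and z_step: "\<And>n. z (Suc n) = w n + lam n *\<^sub>R (F (z n) - F (w n))"
    and lam_step: "\<And>n. lam (Suc n) =
          (if F (z n) \<noteq> F (w n)
           then min (mu * norm (z n - w n) / norm (F (z n) - F (w n))) (lam n + xi n)
           else lam n + xi n)"
begin

definition gap :: "nat \<Rightarrow> real" where "gap n = norm (z n - w n)"
definition Fgap :: "nat \<Rightarrow> real" where "Fgap n = norm (F (z n) - F (w n))"
definition lam_bound :: real where "lam_bound = lam 0 + suminf xi"

lemma p_in_C: "p \<in> C"
  using p_SD by (simp add: S_D_def)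

lemma C_ne_closed_convex: "C \<noteq> {}" "closed C" "convex C"
  using p_in_C C_closed C_convex by auto

lemma w_in_C: "w n \<in> C"
  unfolding w_def by (rule metric_proj_in[OF C_ne_closed_convex])

lemma w_variational_ineq: "v \<in> C \<Longrightarrow> inner (z n - lam n *\<^sub>R F (z n) - w n) (v - w n) \<le> 0"
  unfolding w_def by (rule metric_proj_variational_ineq[OF C_ne_closed_convex])

lemma isCont_F: "isCont F x"
  using uniformly_continuous_imp_continuous[OF F_uc] by (simp add: continuous_on_eq_continuous_at)

lemma lam_pos: "lam n > 0"
proof (induction n)
  case (Suc n)
  have "mu * norm (z n - w n) / norm (F (z n) - F (w n)) > 0" if "F (z n) \<noteq> F (w n)"
  proof -
    have "z n \<noteq> w n" using that by auto
    then show ?thesis using that mu by simp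
  qed
  then show ?case using Suc.IH xi_nonneg[of n] lam_step[of n] by auto
qed (rule lam0)

lemma lam_le_step: "lam (Suc n) \<le> lam n + xi n"
  using lam_step[of n] by auto

lemma lam_Fgap_le: "lam (Suc n) * Fgap n \<le> mu * gap n"
proof (cases "F (z n) = F (w n)")
  case False
  then have "lam (Suc n) \<le> mu * gap n / Fgap n"
    using lam_step[of n] by (simp add: gap_def Fgap_def)
  then show ?thesis using False by (simp add: Fgap_def pos_le_divide_eq)
qed (use mu in \<open>simp add: Fgap_def gap_def\<close>)

lemma lam_Fgap_eq_if_decreasing:
  assumes "lam (Suc n) < lam n"
  shows "lam (Suc n) * Fgap n = mu * gap n"
proof -
  have "F (z n) \<noteq> F (w n)" "lam (Suc n) < lam n + xi n"
    using assms lam_step[of n] xi_nonneg[of n] by (auto split: if_splits)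
  then have "lam (Suc n) = mu * gap n / Fgap n"
    using lam_step[of n] by (simp add: gap_def Fgap_def min_def split: if_splits)
  then show ?thesis using \<open>F (z n) \<noteq> F (w n)\<close> by (simp add: Fgap_def)
qed

lemma lam_le_bound: "lam n \<le> lam_bound"
proof -
  have "lam n \<le> lam 0 + (\<Sum>j<n. xi j)"
    by (induction n) (auto intro: order_trans[OF lam_le_step])
  also have "(\<Sum>j<n. xi j) \<le> suminf xi"
    using xi_sum xi_nonneg by (auto intro!: sum_le_suminf)
  finally show ?thesis by (simp add: lam_bound_def)
qed

lemma lam_bound_nonneg: "0 \<le> lam_bound"
  using lam_le_bound[of 0] lam0 by simp

lemma dist_z_Suc_sq_le:
  "norm (z (Suc n) - p)^2 \<le> norm (z n - p)^2 - gap n^2 + lam n^2 * Fgap n^2"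
proof -
  have "inner (z n - lam n *\<^sub>R F (z n) - w n) (p - w n) \<le> 0"
    using p_in_C by (rule w_variational_ineq)
  moreover have "0 \<le> lam n * inner (F (w n)) (w n - p)"
    using p_SD w_in_C[of n] lam_pos[of n] by (simp add: S_D_def)
  moreover have "norm (z (Suc n) - p)^2 = norm (z n - p)^2 - gap n^2 + lam n^2 * Fgap n^2
      + 2 * inner (z n - lam n *\<^sub>R F (z n) - w n) (p - w n) - 2 * (lam n * inner (F (w n)) (w n - p))"
    unfolding z_step gap_def Fgap_def power2_norm_eq_inner
    by (simp add: inner_simps algebra_simps power2_eq_square inner_commute)
  ultimately show ?thesis by linarith
qed

definition shrink_weight :: "nat \<Rightarrow> real" where
  "shrink_weight n = (if lam (Suc n) < sqrt mu * lam n then lam n else 0)"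

lemma shrink_weight_nonneg: "0 \<le> shrink_weight n"
  using lam_pos[of n] by (simp add: shrink_weight_def)

lemma sum_shrink_weight_le: "(\<Sum>j<n. shrink_weight j) \<le> lam_bound / (1 - sqrt mu)"
proof -
  have "sqrt mu < 1" using mu by simp
  have "lam n + (1 - sqrt mu) * (\<Sum>j<n. shrink_weight j) \<le> lam 0 + (\<Sum>j<n. xi j)"
    unfolding shrink_weight_def by (rule sum_shrinking_steps_le[of lam xi, OF lam_le_step xi_nonneg])
  moreover have "(\<Sum>j<n. xi j) \<le> suminf xi"
    using xi_sum xi_nonneg by (auto intro!: sum_le_suminf)
  ultimately have "(1 - sqrt mu) * (\<Sum>j<n. shrink_weight j) \<le> lam_bound"
    using lam_pos[of n] by (simp add: lam_bound_def)
  then show ?thesis using \<open>sqrt mu < 1\<close> by (simp add: field_simps)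
qed

lemma dist_z_Suc_sq_le_weighted:
  "norm (z (Suc n) - p)^2 \<le> norm (z n - p)^2 - (1 - mu) * gap n^2 + lam_bound * shrink_weight n * Fgap n^2"
proof (cases "lam (Suc n) < sqrt mu * lam n")
  case True
  have "lam n^2 * Fgap n^2 \<le> lam_bound * lam n * Fgap n^2"
    using lam_le_bound[of n] lam_pos[of n] by (simp add: power2_eq_square mult_right_mono)
  moreover have "0 \<le> mu * gap n^2" using mu by simp
  ultimately show ?thesis
    using dist_z_Suc_sq_le[of n] True by (simp add: shrink_weight_def algebra_simps)
next
  case False
  have "sqrt mu * (lam n * Fgap n) \<le> lam (Suc n) * Fgap n"
    using False by (simp add: Fgap_def mult.assoc[symmetric] mult_right_mono)
  also have "\<dots> \<le> sqrt mu * (sqrt mu * gap n)"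
    using lam_Fgap_le[of n] mu by (simp add: mult.assoc[symmetric])
  finally have "lam n * Fgap n \<le> sqrt mu * gap n"
    using mu by simp
  then have "(lam n * Fgap n)^2 \<le> (sqrt mu * gap n)^2"
    using lam_pos[of n] by (intro power_mono) (simp_all add: Fgap_def)
  then have "lam n^2 * Fgap n^2 \<le> mu * gap n^2"
    using mu by (simp add: power_mult_distrib)
  then show ?thesis
    using dist_z_Suc_sq_le[of n] False by (simp add: shrink_weight_def algebra_simps)
qed

lemma dist_w_le_affine:
  obtains a b where "0 \<le> a" and "0 \<le> b" and "\<And>n. norm (w n - p) \<le> a + b * norm (z n - p)"
proof -
  obtain B where "B \<ge> 0" and B: "\<And>x y. norm (F x - F y) \<le> 1 + B * norm (x - y)"
    using uniformly_continuous_on_UNIV_affine_bound[OF F_uc] by blast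
  have bound: "norm (w n - p) \<le> lam_bound * (norm (F p) + 1) + (1 + lam_bound * B) * norm (z n - p)" for n
  proof -
    have "norm (F (z n)) \<le> norm (F p) + 1 + B * norm (z n - p)"
      using B[of "z n" p] norm_triangle_ineq2[of "F (z n)" "F p"] by linarith
    then have "lam n * norm (F (z n)) \<le> lam_bound * (norm (F p) + 1 + B * norm (z n - p))"
      using lam_le_bound[of n] lam_pos[of n] \<open>B \<ge> 0\<close> by (intro mult_mono) auto
    moreover have "norm (w n - p) \<le> norm ((z n - p) - lam n *\<^sub>R F (z n))"
      using norm_metric_proj_diff_le[OF C_ne_closed_convex p_in_C, of "z n - lam n *\<^sub>R F (z n)"]
      by (simp add: w_def algebra_simps)
    moreover have "norm ((z n - p) - lam n *\<^sub>R F (z n)) \<le> norm (z n - p) + lam n * norm (F (z n))"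
      using norm_triangle_ineq4[of "z n - p" "lam n *\<^sub>R F (z n)"] lam_pos[of n] by simp
    ultimately show ?thesis by (simp add: algebra_simps)
  qed
  show ?thesis
    by (rule that[OF _ _ bound]) (use lam_bound_nonneg \<open>B \<ge> 0\<close> in simp_all)
qed

lemma Fgap_sq_le:
  obtains K where "0 \<le> K" and "\<And>n. Fgap n^2 \<le> K * (1 + norm (z n - p)^2)"
proof -
  obtain B where "B \<ge> 0" and B: "\<And>x y. norm (F x - F y) \<le> 1 + B * norm (x - y)"
    using uniformly_continuous_on_UNIV_affine_bound[OF F_uc] by blast
  obtain a b where "0 \<le> a" "0 \<le> b" and ab: "\<And>n. norm (w n - p) \<le> a + b * norm (z n - p)"
    using dist_w_le_affine by blast
  define c0 where "c0 = 1 + B * a"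
  define c1 where "c1 = B * (1 + b)"
  have "Fgap n^2 \<le> (2 * c0^2 + 2 * c1^2) * (1 + norm (z n - p)^2)" for n
  proof -
    have "gap n \<le> norm (z n - p) + norm (w n - p)"
      unfolding gap_def using norm_triangle_ineq4[of "z n - p" "w n - p"] by simp
    then have "B * gap n \<le> B * (a + (1 + b) * norm (z n - p))"
      using ab[of n] \<open>B \<ge> 0\<close> by (intro mult_left_mono) (auto simp: algebra_simps)
    then have "Fgap n \<le> c0 + c1 * norm (z n - p)"
      using B[of "z n" "w n"] by (simp add: Fgap_def gap_def c0_def c1_def algebra_simps)
    then have "Fgap n^2 \<le> (c0 + c1 * norm (z n - p))^2"
      by (intro power_mono) (simp_all add: Fgap_def)
    also have "\<dots> \<le> 2 * c0^2 + 2 * c1^2 * norm (z n - p)^2"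
      using zero_le_power2[of "c0 - c1 * norm (z n - p)"] by (simp add: power2_eq_square algebra_simps)
    also have "\<dots> \<le> (2 * c0^2 + 2 * c1^2) * (1 + norm (z n - p)^2)"
      by (simp add: algebra_simps)
    finally show ?thesis .
  qed
  then show ?thesis by (intro that[of "2 * c0^2 + 2 * c1^2"]) simp_all
qed

lemma dist_z_bounded:
  obtains R where "\<And>n. norm (z n - p) \<le> R"
proof -
  obtain K where "0 \<le> K" and K: "\<And>n. Fgap n^2 \<le> K * (1 + norm (z n - p)^2)"
    using Fgap_sq_le by blast
  have step: "1 + norm (z (Suc n) - p)^2 \<le> (1 + lam_bound * K * shrink_weight n) * (1 + norm (z n - p)^2)" for n
  proof -
    have "lam_bound * shrink_weight n * Fgap n^2 \<le> lam_bound * shrink_weight n * (K * (1 + norm (z n - p)^2))"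
      using K[of n] lam_bound_nonneg shrink_weight_nonneg[of n] by (intro mult_left_mono) auto
    moreover have "0 \<le> (1 - mu) * gap n^2" using mu by simp
    ultimately show ?thesis
      using dist_z_Suc_sq_le_weighted[of n] by (simp add: algebra_simps)
  qed
  define E where "E = (1 + norm (z 0 - p)^2) * exp (lam_bound * K * (lam_bound / (1 - sqrt mu)))"
  have E: "1 + norm (z n - p)^2 \<le> E" for n
  proof -
    have "1 + norm (z n - p)^2 \<le> (1 + norm (z 0 - p)^2) * exp (\<Sum>j<n. lam_bound * K * shrink_weight j)"
      using step by (rule discrete_gronwall) simp
    also have "(\<Sum>j<n. lam_bound * K * shrink_weight j) \<le> lam_bound * K * (lam_bound / (1 - sqrt mu))"
      unfolding sum_distrib_left[symmetric] using sum_shrink_weight_le[of n] lam_bound_nonneg \<open>0 \<le> K\<close>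
      by (intro mult_left_mono) simp_all
    then have "(1 + norm (z 0 - p)^2) * exp (\<Sum>j<n. lam_bound * K * shrink_weight j) \<le> E"
      unfolding E_def by (intro mult_left_mono) simp_all
    finally show ?thesis .
  qed
  have "norm (z n - p)^2 \<le> E" for n
    using E[of n] by linarith
  then show ?thesis using that real_le_rsqrt by blast
qed

lemma bounded_range_w: "bounded (range w)"
proof -
  obtain R where R: "\<And>n. norm (z n - p) \<le> R" using dist_z_bounded by blast
  obtain a b where "0 \<le> a" "0 \<le> b" and ab: "\<And>n. norm (w n - p) \<le> a + b * norm (z n - p)"
    using dist_w_le_affine by blast
  have "dist p (w n) \<le> a + b * R" for n
  proof -
    have "b * norm (z n - p) \<le> b * R" using R[of n] \<open>0 \<le> b\<close> by (rule mult_left_mono)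
    then show ?thesis using ab[of n] by (simp add: dist_norm norm_minus_commute)
  qed
  then have "\<forall>y\<in>range w. dist p y \<le> a + b * R" by blast
  then show ?thesis unfolding bounded_def by blast
qed

lemma summable_gap_sq: "summable (\<lambda>n. gap n^2)"
proof -
  obtain K where "0 \<le> K" and K: "\<And>n. Fgap n^2 \<le> K * (1 + norm (z n - p)^2)"
    using Fgap_sq_le by blast
  obtain R where R: "\<And>n. norm (z n - p) \<le> R" using dist_z_bounded by blast
  define G where "G = K * (1 + R^2)"
  have Fgap_le: "Fgap n^2 \<le> G" for n
  proof -
    have "norm (z n - p)^2 \<le> R^2" using R[of n] by (intro power_mono) auto
    then have "K * (1 + norm (z n - p)^2) \<le> G"
      unfolding G_def using \<open>0 \<le> K\<close> by (intro mult_left_mono) simp_all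
    then show ?thesis using K[of n] by linarith
  qed
  have telescope: "norm (z n - p)^2 + (1 - mu) * (\<Sum>j<n. gap j^2)
      \<le> norm (z 0 - p)^2 + lam_bound * G * (\<Sum>j<n. shrink_weight j)" for n
  proof (induction n)
    case (Suc n)
    have "lam_bound * shrink_weight n * Fgap n^2 \<le> lam_bound * shrink_weight n * G"
      using Fgap_le[of n] lam_bound_nonneg shrink_weight_nonneg[of n] by (intro mult_left_mono) auto
    then show ?case
      using Suc.IH dist_z_Suc_sq_le_weighted[of n] by (simp add: algebra_simps)
  qed simp
  have "(\<Sum>j<n. gap j^2) \<le> (norm (z 0 - p)^2 + lam_bound * G * (lam_bound / (1 - sqrt mu))) / (1 - mu)" for n
  proof -
    have "0 \<le> lam_bound * G" using lam_bound_nonneg \<open>0 \<le> K\<close> by (simp add: G_def)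
    then have "lam_bound * G * (\<Sum>j<n. shrink_weight j) \<le> lam_bound * G * (lam_bound / (1 - sqrt mu))"
      by (intro mult_left_mono sum_shrink_weight_le)
    then have "(1 - mu) * (\<Sum>j<n. gap j^2) \<le> norm (z 0 - p)^2 + lam_bound * G * (lam_bound / (1 - sqrt mu))"
      using telescope[of n] zero_le_power2[of "norm (z n - p)"] by linarith
    then show ?thesis using mu by (subst pos_le_divide_eq) (simp_all add: mult.commute)
  qed
  then show ?thesis by (intro summableI_nonneg_bounded) auto
qed

lemma gap_tendsto_0: "gap \<longlonglongrightarrow> 0"
proof -
  have "(\<lambda>n. sqrt (gap n^2)) \<longlonglongrightarrow> sqrt 0"
    using summable_LIMSEQ_zero[OF summable_gap_sq] by (rule tendsto_real_sqrt)
  moreover have "(\<lambda>n. sqrt (gap n^2)) = gap" by (simp add: fun_eq_iff gap_def)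
  ultimately show ?thesis by simp
qed

lemma Fgap_tendsto_0: "Fgap \<longlonglongrightarrow> 0"
proof -
  have "(\<lambda>n. dist (z n) (w n)) \<longlonglongrightarrow> 0"
    using gap_tendsto_0 by (simp add: gap_def[abs_def] dist_norm)
  then have "(\<lambda>n. dist (F (z n)) (F (w n))) \<longlonglongrightarrow> 0"
    using F_uc[unfolded uniformly_continuous_on_sequentially, THEN spec, THEN spec, of z w] by simp
  then show ?thesis by (simp add: Fgap_def[abs_def] dist_norm)
qed

lemma inner_F_w_lower_bound:
  assumes "v \<in> C"
  shows "- ((gap n / lam n + Fgap n) * norm (v - w n)) \<le> inner (F (w n)) (v - w n)"
proof -
  have "inner (z n - w n) (v - w n) \<le> lam n * inner (F (z n)) (v - w n)"
    using w_variational_ineq[OF assms, of n] by (simp add: inner_diff_left algebra_simps)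
  moreover have "- (gap n * norm (v - w n)) \<le> inner (z n - w n) (v - w n)"
    using Cauchy_Schwarz_ineq2[of "z n - w n" "v - w n"] by (simp add: gap_def abs_le_iff)
  ultimately have "- (gap n * norm (v - w n)) \<le> lam n * inner (F (z n)) (v - w n)"
    by linarith
  then have "- (gap n / lam n * norm (v - w n)) \<le> inner (F (z n)) (v - w n)"
    using lam_pos[of n] by (simp add: field_simps)
  moreover have "inner (F (z n) - F (w n)) (v - w n) \<le> Fgap n * norm (v - w n)"
    using Cauchy_Schwarz_ineq2[of "F (z n) - F (w n)" "v - w n"] by (simp add: Fgap_def abs_le_iff)
  ultimately show ?thesis by (simp add: inner_diff_left algebra_simps)
qed

lemma gap_div_lam_le_if_decreasing:
  assumes "lam (Suc n) < lam n"
  shows "gap n / lam n \<le> Fgap n / mu"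
proof -
  have "gap n / lam n \<le> gap n / lam (Suc n)"
    using assms lam_pos by (intro divide_left_mono) (auto simp: gap_def)
  also have "\<dots> = Fgap n / mu"
    using lam_Fgap_eq_if_decreasing[OF assms] lam_pos[of "Suc n"] mu by (simp add: field_simps)
  finally show ?thesis .
qed

lemma gap_div_lam_tendsto_0_if_finitely_many_decreases:
  assumes "finite {n. lam (Suc n) < lam n}"
  shows "(\<lambda>n. gap n / lam n) \<longlonglongrightarrow> 0"
proof -
  obtain m where m: "\<And>n. lam (Suc n) < lam n \<Longrightarrow> n \<le> m"
    using assms unfolding finite_nat_set_iff_bounded_le by blast
  have lam_ge: "lam (Suc m) \<le> lam n" if "Suc m \<le> n" for n
    using that
  proof (induction n rule: dec_induct)
    case (step n)
    then show ?case using m[of n] by linarith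
  qed simp
  show ?thesis
  proof (rule Lim_null_comparison)
    show "\<forall>\<^sub>F n in sequentially. norm (gap n / lam n) \<le> gap n / lam (Suc m)"
      unfolding eventually_sequentially
    proof (intro exI allI impI)
      fix n assume "Suc m \<le> n"
      have "gap n / lam n \<le> gap n / lam (Suc m)"
        using lam_ge[OF \<open>Suc m \<le> n\<close>] lam_pos[of n] lam_pos[of "Suc m"]
        by (intro divide_left_mono) (simp_all add: gap_def)
      then show "norm (gap n / lam n) \<le> gap n / lam (Suc m)"
        using lam_pos[of n] by (simp add: gap_def)
    qed
    show "(\<lambda>n. gap n / lam (Suc m)) \<longlonglongrightarrow> 0"
      using gap_tendsto_0 by (rule tendsto_divide_zero)
  qed
qed

lemma subseq_gap_div_lam_tendsto_0:
  obtains s where "strict_mono s" and "(\<lambda>k. gap (s k) / lam (s k)) \<longlonglongrightarrow> 0"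
proof (cases "finite {n. lam (Suc n) < lam n}")
  case True
  then have "(\<lambda>k. gap (id k) / lam (id k)) \<longlonglongrightarrow> 0"
    by (simp add: gap_div_lam_tendsto_0_if_finitely_many_decreases)
  with strict_mono_id show ?thesis by (rule that)
next
  case False
  then obtain s :: "nat \<Rightarrow> nat" where "strict_mono s" and decr: "\<And>k. lam (Suc (s k)) < lam (s k)"
    using infinite_enumerate by blast
  have "(\<lambda>k. gap (s k) / lam (s k)) \<longlonglongrightarrow> 0"
  proof (rule Lim_null_comparison)
    show "\<forall>\<^sub>F k in sequentially. norm (gap (s k) / lam (s k)) \<le> Fgap (s k) / mu"
      using gap_div_lam_le_if_decreasing[OF decr] lam_pos by (simp add: gap_def abs_of_pos always_eventually)
    show "(\<lambda>k. Fgap (s k) / mu) \<longlonglongrightarrow> 0"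
      using LIMSEQ_subseq_LIMSEQ[OF Fgap_tendsto_0 \<open>strict_mono s\<close>]
      by (intro tendsto_divide_zero) (simp add: o_def)
  qed
  with \<open>strict_mono s\<close> show ?thesis by (rule that)
qed

lemma minty_ineq_at_weak_limit:
  assumes qm: "quasimonotone F" and "strict_mono t" and w_t: "weak_conv (w \<circ> t) u"
    and ratio: "(\<lambda>k. gap (t k) / lam (t k)) \<longlonglongrightarrow> 0"
    and "c > 0" and large: "\<forall>\<^sub>F k in sequentially. c \<le> norm (F ((w \<circ> t) k))"
    and "v \<in> C"
  shows "0 \<le> inner (F v) (v - u)"
proof -
  define a where "a = (\<lambda>k. gap (t k) / lam (t k) + Fgap (t k))"
  have "(\<lambda>k. gap (t k) / lam (t k) + Fgap (t k)) \<longlonglongrightarrow> 0 + 0"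
    using ratio LIMSEQ_subseq_LIMSEQ[OF Fgap_tendsto_0 \<open>strict_mono t\<close>]
    by (intro tendsto_add) (simp_all add: o_def)
  then have "a \<longlonglongrightarrow> 0" by (simp add: a_def)
  obtain B where B: "\<And>n. norm (w n) \<le> B"
    using bounded_range_w by (auto simp: bounded_iff)
  show ?thesis
  proof (rule quasimonotone_minty_limit[OF qm isCont_F w_t _ \<open>c > 0\<close> large,
        where b = "\<lambda>k. a k * (norm v + B)"])
    show "bounded (range (w \<circ> t))"
      using bounded_range_w by (rule bounded_subset) auto
    show "(\<lambda>k. a k * (norm v + B)) \<longlonglongrightarrow> 0"
      using \<open>a \<longlonglongrightarrow> 0\<close> by (rule tendsto_mult_left_zero)
    fix k
    have "norm (v - w (t k)) \<le> norm v + B"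
      using norm_triangle_ineq4[of v "w (t k)"] B[of "t k"] by linarith
    moreover have "0 \<le> a k"
      using lam_pos[of "t k"] by (simp add: a_def gap_def Fgap_def)
    ultimately have "a k * norm (v - w (t k)) \<le> a k * (norm v + B)"
      by (rule mult_left_mono)
    then show "- (a k * (norm v + B)) \<le> inner (F ((w \<circ> t) k)) (v - (w \<circ> t) k)"
      using inner_F_w_lower_bound[OF \<open>v \<in> C\<close>, of "t k"] by (simp add: a_def)
  qed
qed

lemma weak_cluster_point_in_S_D_or_zero:
  assumes qm: "quasimonotone F"
    and F_weak_lsc: "\<And>xs x. weak_conv xs x \<Longrightarrow>
      ereal (norm (F x)) \<le> Liminf sequentially (\<lambda>n. ereal (norm (F (xs n))))"
  shows "\<exists>u. weak_cluster_point z u \<and> (u \<in> S_D C F \<or> F u = 0)"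
proof -
  obtain s where "strict_mono s" and ratio_s: "(\<lambda>k. gap (s k) / lam (s k)) \<longlonglongrightarrow> 0"
    using subseq_gap_div_lam_tendsto_0 by blast
  have "bounded (range (w \<circ> s))"
    using bounded_range_w by (rule bounded_subset) auto
  then obtain r u where "strict_mono r" and "weak_conv ((w \<circ> s) \<circ> r) u"
    using bounded_imp_weak_convergent_subseq by blast
  define t where "t = s \<circ> r"
  have "strict_mono t"
    unfolding t_def using \<open>strict_mono s\<close> \<open>strict_mono r\<close> by (rule strict_mono_o)
  have w_t: "weak_conv (w \<circ> t) u"
    using \<open>weak_conv ((w \<circ> s) \<circ> r) u\<close> by (simp add: t_def o_assoc)
  have "(\<lambda>k. gap (t k)) \<longlonglongrightarrow> 0"
    using LIMSEQ_subseq_LIMSEQ[OF gap_tendsto_0 \<open>strict_mono t\<close>] by (simp add: o_def)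
  then have "weak_conv (z \<circ> t) u"
    using w_t by (intro weak_conv_if_norm_diff_tendsto_0[OF w_t]) (simp add: gap_def)
  then have cluster: "weak_cluster_point z u"
    unfolding weak_cluster_point_def using \<open>strict_mono t\<close> by blast
  have "u \<in> C"
    using C_closed C_convex _ w_t by (rule weak_conv_limit_in_closed_convex) (simp add: w_in_C)
  have "u \<in> S_D C F" if "F u \<noteq> 0"
  proof -
    define c where "c = norm (F u) / 2"
    have "c > 0" using that by (simp add: c_def)
    have "ereal c < ereal (norm (F u))" using that by (simp add: c_def)
    also have "\<dots> \<le> Liminf sequentially (\<lambda>k. ereal (norm (F ((w \<circ> t) k))))"
      using w_t by (rule F_weak_lsc)
    finally have "\<forall>\<^sub>F k in sequentially. ereal c < ereal (norm (F ((w \<circ> t) k)))"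
      by (rule less_LiminfD)
    then have large: "\<forall>\<^sub>F k in sequentially. c \<le> norm (F ((w \<circ> t) k))"
      by (rule eventually_mono) simp
    have "(\<lambda>k. gap (t k) / lam (t k)) \<longlonglongrightarrow> 0"
      using LIMSEQ_subseq_LIMSEQ[OF ratio_s \<open>strict_mono r\<close>] by (simp add: o_def t_def)
    then have "0 \<le> inner (F v) (v - u)" if "v \<in> C" for v
      using minty_ineq_at_weak_limit[OF qm \<open>strict_mono t\<close> w_t _ \<open>c > 0\<close> large that] by blast
    then show ?thesis using \<open>u \<in> C\<close> by (simp add: S_D_def)
  qed
  then show ?thesis using cluster by blast
qed

end

theorem lemma4p4:
  fixes C :: "'a::{real_inner,complete_space} set"
    and F :: "'a \<Rightarrow> 'a"
    and z w :: "nat \<Rightarrow> 'a"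
    and lam xi :: "nat \<Rightarrow> real"
    and mu :: real
  assumes C_ne: "C \<noteq> {}" and C_closed: "closed C" and C_convex: "convex C"
    and A1: "S_D C F \<noteq> {}"
    and A2: "quasimonotone F"
    and A3: "uniformly_continuous_on UNIV F"
    and A4: "\<And>xs x. weak_conv xs x \<Longrightarrow>
               ereal (norm (F x)) \<le> Liminf sequentially (\<lambda>n. ereal (norm (F (xs n))))"
    and mu: "0 < mu" "mu < 1"
    and xi_nonneg: "\<And>n. xi n \<ge> 0" and xi_sum: "summable xi"
    and lam0: "lam 0 > 0"
    and w_def: "\<And>n. w n = metric_proj C (z n - lam n *\<^sub>R F (z n))"
    and z_step: "\<And>n. z (Suc n) = w n + lam n *\<^sub>R (F (z n) - F (w n))"
    and lam_step: "\<And>n. lam (Suc n) =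
          (if F (z n) \<noteq> F (w n)
           then min (mu * norm (z n - w n) / norm (F (z n) - F (w n))) (lam n + xi n)
           else lam n + xi n)"
    and z_ne_w: "\<And>n. z n \<noteq> w n"
  shows "\<exists>u. weak_cluster_point z u \<and> (u \<in> S_D C F \<or> F u = 0)"
proof -
  obtain p where "p \<in> S_D C F" using A1 by blast
  then interpret adaptive_tseng C F z w lam xi mu p
    using C_closed C_convex A3 mu xi_nonneg xi_sum lam0 w_def z_step lam_step
    by unfold_locales auto
  show ?thesis using A2 A4 by (rule weak_cluster_point_in_S_D_or_zero)
qed

end
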